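(* In the binary setting, for every prior $\pi\in(0,1)$ and every $q\in[\tfrac12,1]$, the advertiser's value $U_\pi(q)=u_D-u_{ND}$ for a signal of quality $q$ satisfies $$U_\pi(q)\le (v_H-v_L)^2\,\bar f\,\Big(\tfrac23q^3-\tfrac12q^2+\tfrac1{24}\Big),\qquad\text{where }\bar f=\sup_{p\in[v_L,v_H]}f(p).$$
   Context: Binary setting: a single advertiser bids in a second-price auction. The user is of type $H$ with prior $\pi\in(0,1)$ and of type $L$ otherwise; values $v_H>v_L\ge0$. The highest competing bid is independent of the type with density $f$ and cdf $F$. Without data she bids $\bar v=\pi v_H+(1-\pi)v_L$ (expected utility $u_{ND}$). A signal $s\in\{h,\ell\}$ of quality $q$ has $\Pr[s=h\mid H]=\Pr[s=\ell\mid L]=q$, independent of the competing bid given the type; with it she bids the posterior expected value $v|s$, where $\pi|h=\frac{\pi q}{\pi q+(1-\pi)(1-q)}$, $\pi|\ell=\frac{\pi(1-q)}{\pi(1-q)+(1-\pi)q}$, $v|s=(\pi|s)v_H+(1-\pi|s)v_L$ (expected utility $u_D$). *)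

theory Defs
  imports "HOL-Analysis.Analysis"
begin

text \<open>Expected utility in a second-price auction of an advertiser whose (expected) value
  is w and who bids b, when the highest competing bid has density f supported on [0,inf):
  she wins iff the competing bid p is below b and then pays p.\<close>
definition spa_util :: "(real \<Rightarrow> real) \<Rightarrow> real \<Rightarrow> real \<Rightarrow> real" where
  "spa_util f w b = integral {0..b} (\<lambda>p. (w - p) * f p)"

definition post_h :: "real \<Rightarrow> real \<Rightarrow> real" where
  "post_h \<pi> q = \<pi> * q / (\<pi> * q + (1 - \<pi>) * (1 - q))"

definition post_l :: "real \<Rightarrow> real \<Rightarrow> real" where
  "post_l \<pi> q = \<pi> * (1 - q) / (\<pi> * (1 - q) + (1 - \<pi>) * q)"

definition exp_val :: "real \<Rightarrow> real \<Rightarrow> real \<Rightarrow> real" where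
  "exp_val vH vL \<rho> = \<rho> * vH + (1 - \<rho>) * vL"

definition u_ND :: "(real \<Rightarrow> real) \<Rightarrow> real \<Rightarrow> real \<Rightarrow> real \<Rightarrow> real" where
  "u_ND f vH vL \<pi> = spa_util f (exp_val vH vL \<pi>) (exp_val vH vL \<pi>)"

definition u_D :: "(real \<Rightarrow> real) \<Rightarrow> real \<Rightarrow> real \<Rightarrow> real \<Rightarrow> real \<Rightarrow> real" where
  "u_D f vH vL \<pi> q =
     (\<pi> * q + (1 - \<pi>) * (1 - q)) *
        spa_util f (exp_val vH vL (post_h \<pi> q)) (exp_val vH vL (post_h \<pi> q))
   + (\<pi> * (1 - q) + (1 - \<pi>) * q) *
        spa_util f (exp_val vH vL (post_l \<pi> q)) (exp_val vH vL (post_l \<pi> q))"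

definition data_value :: "(real \<Rightarrow> real) \<Rightarrow> real \<Rightarrow> real \<Rightarrow> real \<Rightarrow> real \<Rightarrow> real" where
  "data_value f vH vL \<pi> q = u_D f vH vL \<pi> q - u_ND f vH vL \<pi>"

end

theory Submission
  imports Defs
begin

(*
  The value of data is  U = a g(w_h) + b g(w_l) - g(c),  where g(w) = spa_util f w w is the
  utility of bidding one's value w, a, b are the probabilities of the signals h, l, w_h, w_l
  the posterior expected values and c the prior expected value.

  1. Analysis: g has "second derivative" f, so g(w) - g(c) - (w - c) F(c) <= M/2 (w - c)^2
     whenever f <= M between c and w (F is the cdf of the competing bid).
  2. Averaging: since the posterior means average to the prior mean (a w_h + b w_l = c),
     the linear terms cancel and U <= M/2 (vH - vL)^2 Var, where Var is the variance of the
     posterior probability of H.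
  3. Bayes: Var <= (2q - 1)^2 / 4, and (2q - 1)^2 / 8 <= 2/3 q^3 - 1/2 q^2 + 1/24 for q >= 1/2.
*)

section \<open>Utility of bidding one's value\<close>

text \<open>Utility integrands are integrable on bounded intervals: a bounded continuous factor
  times a nonnegative integrable density.\<close>
lemma utility_integrand_integrable:
  fixes f :: "real \<Rightarrow> real"
  assumes f_int: "f integrable_on UNIV" and f_nonneg: "\<And>p. f p \<ge> 0"
  shows "(\<lambda>p. (w - p) * f p) integrable_on {a..b}"
proof -
  have "f absolutely_integrable_on {a..b}"
    by (rule nonnegative_absolutely_integrable)
      (auto intro: integrable_on_subinterval[OF f_int] f_nonneg)
  then have "(\<lambda>p. (w - p) * f p) absolutely_integrable_on {a..b}"
    by (intro absolutely_integrable_bounded_measurable_product_real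
          continuous_imp_measurable_on_sets_lebesgue compact_imp_bounded
          compact_continuous_image)
       (auto intro!: continuous_intros)
  then show ?thesis
    using absolutely_integrable_on_def by blast
qed

lemma ramp_has_integral:
  fixes a b :: real
  assumes "a \<le> b"
  shows "((\<lambda>p. b - p) has_integral (b - a)^2 / 2) {a..b}"
    and "((\<lambda>p. p - a) has_integral (b - a)^2 / 2) {a..b}"
proof -
  have "((\<lambda>p. b - p) has_integral - ((b - b)^2 / 2) - - ((b - a)^2 / 2)) {a..b}"
    by (rule fundamental_theorem_of_calculus[OF assms])
       (auto intro!: derivative_eq_intros simp: has_real_derivative_iff_has_vector_derivative[symmetric]
             power2_eq_square field_simps)
  then show "((\<lambda>p. b - p) has_integral (b - a)^2 / 2) {a..b}" by simp
  have "((\<lambda>p. p - a) has_integral (b - a)^2 / 2 - (a - a)^2 / 2) {a..b}"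
    by (rule fundamental_theorem_of_calculus[OF assms])
       (auto intro!: derivative_eq_intros simp: has_real_derivative_iff_has_vector_derivative[symmetric]
             power2_eq_square field_simps)
  then show "((\<lambda>p. p - a) has_integral (b - a)^2 / 2) {a..b}" by simp
qed

lemma utility_remainder_eq:
  fixes f :: "real \<Rightarrow> real"
  assumes f_int: "f integrable_on UNIV" and f_nonneg: "\<And>p. f p \<ge> 0"
  shows "spa_util f w w - spa_util f c c - (w - c) * integral {0..c} f
       = integral {0..w} (\<lambda>p. (w - p) * f p) - integral {0..c} (\<lambda>p. (w - p) * f p)"
proof -
  have f_int_c: "f integrable_on {0..c}"
    by (rule integrable_on_subinterval[OF f_int]) auto
  have "integral {0..c} (\<lambda>p. (w - p) * f p)
      = integral {0..c} (\<lambda>p. (c - p) * f p + (w - c) * f p)"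
    by (rule integral_cong) (simp add: algebra_simps)
  also have "\<dots> = spa_util f c c + (w - c) * integral {0..c} f"
    unfolding spa_util_def
    by (simp add: integral_add[OF utility_integrand_integrable[OF f_int f_nonneg]
                                  integrable_on_mult_right[OF f_int_c]])
  finally show ?thesis
    by (simp add: spa_util_def)
qed

lemma utility_remainder_le:
  fixes f :: "real \<Rightarrow> real"
  assumes f_int: "f integrable_on UNIV" and f_nonneg: "\<And>p. f p \<ge> 0"
    and f_le: "\<And>p. min c w \<le> p \<Longrightarrow> p \<le> max c w \<Longrightarrow> f p \<le> M"
    and nonneg: "0 \<le> c" "0 \<le> w"
  shows "spa_util f w w - spa_util f c c - (w - c) * integral {0..c} f \<le> M / 2 * (w - c)^2"
proof -
  let ?h = "\<lambda>p. (w - p) * f p"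
  have h_int: "\<And>a b. ?h integrable_on {a..b}"
    by (rule utility_integrand_integrable[OF f_int f_nonneg])
  have "integral {0..w} ?h - integral {0..c} ?h \<le> M / 2 * (w - c)^2"
  proof (cases "c \<le> w")
    case True
    have "integral {c..w} ?h \<le> integral {c..w} (\<lambda>p. (w - p) * M)"
      using f_le True
      by (intro integral_le h_int has_integral_integrable[OF has_integral_mult_left[OF ramp_has_integral(1)]])
         (auto intro!: mult_left_mono)
    also have "\<dots> = M / 2 * (w - c)^2"
      by (subst integral_unique[OF has_integral_mult_left[OF ramp_has_integral(1)[OF True]]]) simp
    finally show ?thesis
      using Henstock_Kurzweil_Integration.integral_combine[OF nonneg(1) True h_int] by linarith
  next
    case False
    then have w_le_c: "w \<le> c" by simp
    have neg_h_int: "(\<lambda>p. (p - w) * f p) integrable_on {w..c}"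
      using integrable_neg[OF h_int] by (simp add: algebra_simps)
    have "- integral {w..c} ?h = integral {w..c} (\<lambda>p. (p - w) * f p)"
      by (simp add: integral_neg[symmetric] algebra_simps)
    also have "\<dots> \<le> integral {w..c} (\<lambda>p. (p - w) * M)"
      using f_le w_le_c
      by (intro integral_le neg_h_int
                has_integral_integrable[OF has_integral_mult_left[OF ramp_has_integral(2)]])
         (auto intro!: mult_left_mono)
    also have "\<dots> = M / 2 * (w - c)^2"
      by (subst integral_unique[OF has_integral_mult_left[OF ramp_has_integral(2)[OF w_le_c]]])
         (simp add: power2_commute)
    finally show ?thesis
      using Henstock_Kurzweil_Integration.integral_combine[OF nonneg(2) w_le_c h_int] by linarith
  qed
  then show ?thesis
    by (simp add: utility_remainder_eq[OF f_int f_nonneg])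
qed

section \<open>Averaging over two posteriors\<close>

text \<open>A two-point Jensen-type bound: if the points x, y average (with weights a, b) to c,
  the linear parts of the remainder bounds cancel, leaving M/2 times the variance.\<close>
lemma two_point_remainder_bound:
  fixes g :: "real \<Rightarrow> real"
  assumes weights: "0 \<le> a" "0 \<le> b" "a + b = 1" and mean: "a * x + b * y = c"
    and rem_x: "g x - g c - (x - c) * D \<le> M / 2 * (x - c)^2"
    and rem_y: "g y - g c - (y - c) * D \<le> M / 2 * (y - c)^2"
  shows "a * g x + b * g y - g c \<le> M / 2 * (a * (x - c)^2 + b * (y - c)^2)"
proof -
  have "a * g x + b * g y - g c
      = a * (g x - g c - (x - c) * D) + b * (g y - g c - (y - c) * D)
        + D * (a * x + b * y - (a + b) * c) + (a + b - 1) * g c"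
    by (simp add: algebra_simps)
  also have "\<dots> = a * (g x - g c - (x - c) * D) + b * (g y - g c - (y - c) * D)"
    using weights mean by simp
  also have "\<dots> \<le> a * (M / 2 * (x - c)^2) + b * (M / 2 * (y - c)^2)"
    using weights rem_x rem_y by (intro add_mono mult_left_mono) auto
  finally show ?thesis
    by (simp add: algebra_simps)
qed

section \<open>The binary signal\<close>

text \<open>The probability of observing the high signal; the low signal has probability
  prob_high \<pi> (1 - q), and its posterior is post_h \<pi> (1 - q).\<close>
definition prob_high :: "real \<Rightarrow> real \<Rightarrow> real" where
  "prob_high \<pi> q = \<pi> * q + (1 - \<pi>) * (1 - q)"

lemma post_l_eq_post_h: "post_l \<pi> q = post_h \<pi> (1 - q)"
  by (simp add: post_l_def post_h_def)

lemma prob_high_pos: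
  assumes "0 < \<pi>" "\<pi> < 1" "0 \<le> q" "q \<le> 1"
  shows "0 < prob_high \<pi> q"
proof (cases "q = 0")
  case True
  then show ?thesis using assms by (simp add: prob_high_def)
next
  case False
  then show ?thesis using assms by (simp add: prob_high_def add_pos_nonneg)
qed

lemma prob_high_complement: "prob_high \<pi> q + prob_high \<pi> (1 - q) = 1"
  by (simp add: prob_high_def algebra_simps)

lemma prob_high_post_h:
  assumes "prob_high \<pi> q \<noteq> 0"
  shows "prob_high \<pi> q * post_h \<pi> q = \<pi> * q"
  using assms by (simp add: prob_high_def post_h_def)

lemma post_h_in_unit:
  assumes "0 < \<pi>" "\<pi> < 1" "0 \<le> q" "q \<le> 1"
  shows "0 \<le> post_h \<pi> q" "post_h \<pi> q \<le> 1"
  using prob_high_pos[OF assms] assms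
  by (auto simp: post_h_def prob_high_def[symmetric] divide_le_eq) (simp add: prob_high_def)

lemma post_l_in_unit:
  assumes "0 < \<pi>" "\<pi> < 1" "0 \<le> q" "q \<le> 1"
  shows "0 \<le> post_l \<pi> q" "post_l \<pi> q \<le> 1"
  using post_h_in_unit[of \<pi> "1 - q"] assms by (auto simp: post_l_eq_post_h)

lemma post_h_deviation:
  assumes "prob_high \<pi> q \<noteq> 0"
  shows "prob_high \<pi> q * (post_h \<pi> q - \<pi>) = \<pi> * (1 - \<pi>) * (2 * q - 1)"
  using prob_high_post_h[OF assms] by (simp add: prob_high_def algebra_simps)

lemma posterior_mean:
  assumes "prob_high \<pi> q \<noteq> 0" "prob_high \<pi> (1 - q) \<noteq> 0"
  shows "prob_high \<pi> q * post_h \<pi> q + prob_high \<pi> (1 - q) * post_l \<pi> q = \<pi>"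
  using prob_high_post_h[OF assms(1)] prob_high_post_h[OF assms(2)]
  by (simp add: post_l_eq_post_h algebra_simps)

lemma posterior_variance_le:
  assumes prior: "0 < \<pi>" "\<pi> < 1" and quality: "0 \<le> q" "q \<le> 1"
  shows "prob_high \<pi> q * (post_h \<pi> q - \<pi>)^2 + prob_high \<pi> (1 - q) * (post_l \<pi> q - \<pi>)^2
       \<le> (2 * q - 1)^2 / 4"
proof -
  define a where "a = prob_high \<pi> q"
  define b where "b = prob_high \<pi> (1 - q)"
  define K where "K = \<pi> * (1 - \<pi>) * (2 * q - 1)"
  have a_pos: "0 < a" and b_pos: "0 < b"
    using prob_high_pos[OF prior] quality by (auto simp: a_def b_def)
  have weights_sum: "a + b = 1"
    using prob_high_complement by (simp add: a_def b_def)
  have a_dev: "a * (post_h \<pi> q - \<pi>) = K"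
    using post_h_deviation[of \<pi> q] a_pos by (simp add: a_def K_def)
  have "b * (post_l \<pi> q - \<pi>) = \<pi> * (1 - \<pi>) * (2 * (1 - q) - 1)"
    using post_h_deviation[of \<pi> "1 - q"] b_pos by (simp add: b_def post_l_eq_post_h)
  then have b_dev: "b * (post_l \<pi> q - \<pi>) = - K"
    by (simp add: K_def algebra_simps)
  have "a * (post_h \<pi> q - \<pi>)^2 = (a * (post_h \<pi> q - \<pi>))^2 / a"
   and "b * (post_l \<pi> q - \<pi>)^2 = (b * (post_l \<pi> q - \<pi>))^2 / b"
    using a_pos b_pos by (simp_all add: power2_eq_square)
  then have "a * (post_h \<pi> q - \<pi>)^2 + b * (post_l \<pi> q - \<pi>)^2 = K^2 / a + K^2 / b"
    by (simp add: a_dev b_dev)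
  also have "\<dots> = K^2 * (a + b) / (a * b)"
    using a_pos b_pos by (simp add: field_simps)
  also have "\<dots> \<le> (2 * q - 1)^2 / 4"
  proof -
    have "a * b = \<pi> * (1 - \<pi>) + (2 * \<pi> - 1)^2 * (q * (1 - q))"
      by (simp add: a_def b_def prob_high_def power2_eq_square algebra_simps)
    then have ab_ge: "\<pi> * (1 - \<pi>) \<le> a * b"
      using quality by simp
    have prior_var_le: "4 * (\<pi> * (1 - \<pi>)) \<le> 1"
      using zero_le_square[of "2 * \<pi> - 1"] by (simp add: algebra_simps)
    have "4 * K^2 = (4 * (\<pi> * (1 - \<pi>))) * (\<pi> * (1 - \<pi>)) * (2 * q - 1)^2"
      by (simp add: K_def power2_eq_square)
    also have "\<dots> \<le> 1 * (a * b) * (2 * q - 1)^2"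
      using mult_mono[OF prior_var_le ab_ge] prior by (intro mult_right_mono) auto
    finally show ?thesis
      using a_pos b_pos weights_sum by (simp add: field_simps)
  qed
  finally show ?thesis by (simp add: a_def b_def)
qed

text \<open>The cubic in the theorem dominates (2q - 1)^2 / 8 for q \<ge> 1/2; the gap is 2/3 (q - 1/2)^3.\<close>
lemma cubic_bound:
  fixes q :: real
  assumes "1/2 \<le> q"
  shows "(2 * q - 1)^2 / 8 \<le> 2/3 * q^3 - 1/2 * q^2 + 1/24"
proof -
  have "2/3 * q^3 - 1/2 * q^2 + 1/24 - (2 * q - 1)^2 / 8 = 2/3 * (q - 1/2)^3"
    by (simp add: power2_eq_square power3_eq_cube field_simps)
  moreover have "0 \<le> (q - 1/2)^3" using assms by simp
  ultimately show ?thesis by linarith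
qed

lemma exp_val_affine: "exp_val vH vL r = vL + r * (vH - vL)"
  by (simp add: exp_val_def algebra_simps)

lemma exp_val_convex_comb:
  assumes "a + b = 1"
  shows "a * exp_val vH vL r + b * exp_val vH vL s = exp_val vH vL (a * r + b * s)"
proof -
  have "a * exp_val vH vL r + b * exp_val vH vL s = (a + b) * vL + (a * r + b * s) * (vH - vL)"
    by (simp add: exp_val_affine algebra_simps)
  then show ?thesis using assms by (simp add: exp_val_affine)
qed

lemma exp_val_in_range:
  assumes "vL \<le> vH" "0 \<le> r" "r \<le> 1"
  shows "vL \<le> exp_val vH vL r" "exp_val vH vL r \<le> vH"
  using assms mult_left_le_one_le[of "vH - vL" r] by (auto simp: exp_val_affine)

theorem mainTheorem15:
  fixes f :: "real \<Rightarrow> real" and vH vL \<pi> q :: real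
  assumes f_nonneg: "\<And>p. f p \<ge> 0"
    and f_support: "\<And>p. p < 0 \<Longrightarrow> f p = 0"
    and f_int: "f integrable_on UNIV"
    and f_total: "integral UNIV f = 1"
    and f_bdd: "bdd_above (f ` {vL..vH})"
    and vals: "vH > vL" "vL \<ge> 0"
    and prior: "0 < \<pi>" "\<pi> < 1"
    and quality: "1/2 \<le> q" "q \<le> 1"
  shows "data_value f vH vL \<pi> q
     \<le> (vH - vL)^2 * (SUP p\<in>{vL..vH}. f p) * (2/3 * q^3 - 1/2 * q^2 + 1/24)"
proof -
  define M where "M = (SUP p\<in>{vL..vH}. f p)"
  define g where "g = (\<lambda>w. spa_util f w w)"
  define a where "a = prob_high \<pi> q"
  define b where "b = prob_high \<pi> (1 - q)"
  define val where "val = exp_val vH vL"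
  have f_le_M: "\<And>p. p \<in> {vL..vH} \<Longrightarrow> f p \<le> M"
    unfolding M_def by (rule cSUP_upper[OF _ f_bdd])
  have M_nonneg: "0 \<le> M" using f_le_M[of vL] f_nonneg[of vL] vals by auto
  have a_pos: "0 < a" and b_pos: "0 < b"
    using prob_high_pos[OF prior] quality by (auto simp: a_def b_def)
  have in_range: "\<And>r. 0 \<le> r \<Longrightarrow> r \<le> 1 \<Longrightarrow> vL \<le> val r \<and> val r \<le> vH"
    using exp_val_in_range vals by (simp add: val_def)
  have remainder: "\<And>r. 0 \<le> r \<Longrightarrow> r \<le> 1 \<Longrightarrow>
      g (val r) - g (val \<pi>) - (val r - val \<pi>) * integral {0..val \<pi>} f \<le> M / 2 * (val r - val \<pi>)^2"
  proof -
    fix r :: real assume "0 \<le> r" "r \<le> 1"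
    then have "vL \<le> val r" "val r \<le> vH" "vL \<le> val \<pi>" "val \<pi> \<le> vH"
      using in_range[of r] in_range[of \<pi>] prior by auto
    then show "g (val r) - g (val \<pi>) - (val r - val \<pi>) * integral {0..val \<pi>} f
        \<le> M / 2 * (val r - val \<pi>)^2"
      unfolding g_def using vals
      by (intro utility_remainder_le[OF f_int f_nonneg] f_le_M) auto
  qed
  have weights_sum: "a + b = 1"
    using prob_high_complement by (simp add: a_def b_def)
  have mean: "a * val (post_h \<pi> q) + b * val (post_l \<pi> q) = val \<pi>"
    using posterior_mean[of \<pi> q] a_pos b_pos exp_val_convex_comb[OF weights_sum]
    by (simp add: a_def b_def val_def)
  have "data_value f vH vL \<pi> q = a * g (val (post_h \<pi> q)) + b * g (val (post_l \<pi> q)) - g (val \<pi>)"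
    by (simp add: data_value_def u_D_def u_ND_def g_def val_def a_def b_def prob_high_def)
  also have "\<dots> \<le> M / 2 * (a * (val (post_h \<pi> q) - val \<pi>)^2 + b * (val (post_l \<pi> q) - val \<pi>)^2)"
    using a_pos b_pos weights_sum mean post_h_in_unit[OF prior, of q] post_l_in_unit[OF prior, of q]
      quality remainder[of "post_h \<pi> q"] remainder[of "post_l \<pi> q"]
    by (intro two_point_remainder_bound) auto
  also have "\<dots> = M / 2 * (vH - vL)^2 * (a * (post_h \<pi> q - \<pi>)^2 + b * (post_l \<pi> q - \<pi>)^2)"
    by (simp add: val_def exp_val_affine power2_eq_square algebra_simps)
  also have "\<dots> \<le> M / 2 * (vH - vL)^2 * ((2 * q - 1)^2 / 4)"
    using posterior_variance_le[OF prior] quality M_nonneg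
    by (intro mult_left_mono) (auto simp: a_def b_def)
  also have "\<dots> \<le> (vH - vL)^2 * M * (2/3 * q^3 - 1/2 * q^2 + 1/24)"
    using mult_left_mono[OF cubic_bound[OF quality(1)], of "(vH - vL)^2 * M"] M_nonneg
    by (simp add: algebra_simps)
  finally show ?thesis unfolding M_def .
qed

end
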